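(* Let $\kappa>0$. For any $z\in\mathbb C$ with $0<\operatorname{Im}z\le1$ and $|\operatorname{Re}z|\le 2-\kappa$, there exist $E$ with $|E|\le2-\kappa$ and $0\le t<1$ such that $z=t^{-1/2}z^{(E)}_t$. Moreover there is $c_\kappa>0$ (depending only on $\kappa$) such that $c_\kappa\le t$ and $c_\kappa\operatorname{Im}z\le\operatorname{Im}z^{(E)}_t\le c_\kappa^{-1}\operatorname{Im}z$. For such $z,E,t$ one has $m_{sc}(z)=t^{1/2}m^{(E)}$, and $G(z)=(H-z)^{-1}$ has the same distribution as $t^{1/2}G_t^{(E)}$ where $G^{(E)}_t=(H_t-z^{(E)}_t)^{-1}$.
   Context: $m_{sc}(z)$ is the Stieltjes transform of the semicircle density $\frac1{2\pi}\sqrt{(4-x^2)_+}$. For $|E|<2$, $m^{(E)}:=\lim_{\varepsilon\downarrow0}m_{sc}(E+i\varepsilon)$, and $z^{(E)}_t:=E+(1-t)m^{(E)}$ for $0\le t\le1$. $H$ is the $N\times N$ Hermitian band matrix with independent centered Gaussian entries $\{H_{ij}\}_{i\le j}$, $\mathbb E|H_{ij}|^2=S_{ij}$ (where $N=WL$, blocks $\mathcal I_a=\{(a-1)W+1,\dots,aW\}$, $S_{ij}=W^{-1}S^{(B)}_{[i][j]}$, $S^{(B)}_{ab}=\frac13\mathbf 1(a-b\in\{-1,0,1\}\bmod L)$, $[i]$ the block of $i$). $H_t$ is the Hermitian matrix Brownian motion with $H_0=0$, $dH_{t,ij}=\sqrt{S_{ij}}\,dB_{t,ij}$, where $B_{t,ij}$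 ($i\le j$) are independent standard complex Brownian motions and $B_{ji}=\overline{B_{ij}}$; in particular $H_t$ has the law of $\sqrt t\,H$. *)

theory Defs
  imports "HOL-Probability.Probability"
begin

definition sc_density :: "real \<Rightarrow> real" where
  "sc_density x = sqrt (max 0 (4 - x\<^sup>2)) / (2 * pi)"

definition m_sc :: "complex \<Rightarrow> complex" where
  "m_sc z = integral\<^sup>L lborel (\<lambda>x. complex_of_real (sc_density x) / (complex_of_real x - z))"

definition m_bd :: "real \<Rightarrow> complex" where
  "m_bd E = Lim (at_right 0) (\<lambda>\<epsilon>::real. m_sc (complex_of_real E + \<i> * complex_of_real \<epsilon>))"

definition z_flow :: "real \<Rightarrow> real \<Rightarrow> complex" where
  "z_flow E t = complex_of_real E + complex_of_real (1 - t) * m_bd E"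

definition SB :: "nat \<Rightarrow> nat \<Rightarrow> nat \<Rightarrow> real" where
  "SB L a b = (if (int a - int b) mod int L \<in> {(-1) mod int L, 0, 1 mod int L} then 1/3 else 0)"

definition S_band :: "nat \<Rightarrow> nat \<Rightarrow> nat \<Rightarrow> nat \<Rightarrow> real" where
  "S_band W L i j = SB L (i div W) (j div W) / real W"

text \<open>With s = 1 this is the law of H; with s = t it is the law of the matrix Brownian
  motion H_t at time t (started at 0).\<close>
definition gauss_mat ::
  "nat \<Rightarrow> nat \<Rightarrow> real \<Rightarrow> (nat \<Rightarrow> nat \<Rightarrow> real) \<Rightarrow> (nat \<Rightarrow> nat \<Rightarrow> real) \<Rightarrow> nat \<Rightarrow> nat \<Rightarrow> complex" where
  "gauss_mat W L s xi eta i j =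
     (if i < j then complex_of_real (sqrt (s * S_band W L i j)) *
                      (complex_of_real (xi i j) + \<i> * complex_of_real (eta i j)) / complex_of_real (sqrt 2)
      else if i = j then complex_of_real (sqrt (s * S_band W L i i) * xi i i)
      else cnj (complex_of_real (sqrt (s * S_band W L j i)) *
                      (complex_of_real (xi j i) + \<i> * complex_of_real (eta j i)) / complex_of_real (sqrt 2)))"

definition upper_idx :: "nat \<Rightarrow> (nat \<times> nat) set" where
  "upper_idx N = {(i, j). i \<le> j \<and> j < N}"

definition std_gauss_family ::
  "'w measure \<Rightarrow> nat \<Rightarrow> ('w \<Rightarrow> nat \<Rightarrow> nat \<Rightarrow> real) \<Rightarrow> ('w \<Rightarrow> nat \<Rightarrow> nat \<Rightarrow> real) \<Rightarrow> bool" where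
  "std_gauss_family M N xi eta \<longleftrightarrow>
     prob_space M \<and>
     prob_space.indep_vars M (\<lambda>_. borel)
        (\<lambda>k. case k of Inl (i, j) \<Rightarrow> (\<lambda>\<omega>. xi \<omega> i j) | Inr (i, j) \<Rightarrow> (\<lambda>\<omega>. eta \<omega> i j))
        (Inl ` upper_idx N \<union> Inr ` upper_idx N) \<and>
     (\<forall>(i, j) \<in> upper_idx N.
        distributed M lborel (\<lambda>\<omega>. xi \<omega> i j) std_normal_density \<and>
        distributed M lborel (\<lambda>\<omega>. eta \<omega> i j) std_normal_density)"

definition mat_inv :: "nat \<Rightarrow> (nat \<Rightarrow> nat \<Rightarrow> complex) \<Rightarrow> nat \<Rightarrow> nat \<Rightarrow> complex" where
  "mat_inv N A = (THE B. (\<forall>i<N. \<forall>j<N. (\<Sum>k<N. A i k * B k j) = (if i = j then 1 else 0)) \<and>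
                         (\<forall>i j. \<not> (i < N \<and> j < N) \<longrightarrow> B i j = 0))"

definition resolvent :: "nat \<Rightarrow> (nat \<Rightarrow> nat \<Rightarrow> complex) \<Rightarrow> complex \<Rightarrow> nat \<Rightarrow> nat \<Rightarrow> complex" where
  "resolvent N A z = mat_inv N (\<lambda>i j. A i j - (if i = j then z else 0))"

definition mat_law :: "'w measure \<Rightarrow> nat \<Rightarrow> ('w \<Rightarrow> nat \<Rightarrow> nat \<Rightarrow> complex) \<Rightarrow> (nat \<times> nat \<Rightarrow> complex) measure" where
  "mat_law M N X = distr M (PiM ({..<N} \<times> {..<N}) (\<lambda>_. borel))
                      (\<lambda>\<omega>. \<lambda>(i, j) \<in> {..<N} \<times> {..<N}. X \<omega> i j)"

end

theory Submission
  imports Defs "Jordan_Normal_Form.Determinant"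
begin

text \<open>Evaluating the Stieltjes integral in closed form shows that m = m_sc z is the root of
  m^2 + z m + 1 = 0 in the unit disc, so z = -(m + cnj m / r^2) with r = |m|.  Choosing
  t = r^2 and E = -2 Re m / r gives m^(E) = m / r and z_t^(E) = r z; the inequality
  2 / r \<le> 1 + 1 / r^2 gives |E| \<le> |Re z|, and |m| |m + z| = 1 bounds r from below.
  On the matrix side H_t has the law of r H, and (r H - r z)^-1 = (H - z)^-1 / r.\<close>

section \<open>The Stieltjes transform of the semicircle law\<close>

lemma power2_le_4_iff: "x\<^sup>2 \<le> 4 \<longleftrightarrow> \<bar>x\<bar> \<le> (2::real)"
  using abs_le_square_iff[of x 2] by simp

lemma power2_less_4_iff: "x\<^sup>2 < 4 \<longleftrightarrow> \<bar>x\<bar> < (2::real)"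
  using abs_le_square_iff[of 2 x] by (simp add: not_le[symmetric])

text \<open>In the angle \<theta> = arccos (x/2), a primitive of sqrt (4 - x^2) / (x - (a + 1/a)) on [-2, 2].\<close>

definition sc_primitive :: "complex \<Rightarrow> real \<Rightarrow> complex" where
  "sc_primitive a \<theta> = of_real (2 * sin \<theta>) + 2 * a * of_real \<theta>
     - \<i> * (a - 1/a) * (Ln (1 - a * cis (-\<theta>)) - Ln (1 - a * cis \<theta>))"

lemma one_minus_mult_notin_nonpos_Reals:
  fixes a v :: complex
  assumes "cmod a < 1" "cmod v \<le> 1"
  shows "1 - a * v \<notin> \<real>\<^sub>\<le>\<^sub>0"
proof -
  have "Re (a * v) \<le> cmod a * cmod v" by (metis complex_Re_le_cmod norm_mult)
  also have "\<dots> < 1" using assms by (simp add: mult_le_one le_less_trans[OF mult_right_le_one_le])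
  finally show ?thesis by (simp add: complex_nonpos_Reals_iff)
qed

lemma has_vector_derivative_Ln_one_minus_cis:
  assumes a: "cmod a < 1" and f: "(f has_real_derivative f') (at \<theta>)"
  shows "((\<lambda>\<theta>. Ln (1 - a * cis (f \<theta>))) has_vector_derivative
           - \<i> * a * of_real f' * cis (f \<theta>) / (1 - a * cis (f \<theta>))) (at \<theta>)"
proof -
  have inner: "((\<lambda>\<theta>. 1 - a * cis (f \<theta>)) has_vector_derivative - \<i> * a * of_real f' * cis (f \<theta>)) (at \<theta>)"
  proof -
    have "((\<lambda>\<theta>. cis (f \<theta>)) has_vector_derivative of_real f' * (\<i> * cis (f \<theta>))) (at \<theta>)"
      unfolding has_vector_derivative_def
      by (rule has_derivative_eq_rhs[OF has_derivative_cis[OF f[unfolded has_field_derivative_def]]])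
         (auto simp: scaleR_conv_of_real)
    then show ?thesis
      by (rule has_vector_derivative_eq_rhs[OF has_vector_derivative_diff[OF has_vector_derivative_const
            has_vector_derivative_mult_right]]) simp
  qed
  have "1 - a * cis (f \<theta>) \<notin> \<real>\<^sub>\<le>\<^sub>0"
    by (rule one_minus_mult_notin_nonpos_Reals[OF a]) simp
  from field_vector_diff_chain_at[OF inner has_field_derivative_Ln[OF this]]
  show ?thesis by (simp add: o_def divide_inverse)
qed

lemma has_vector_derivative_sc_primitive:
  assumes a: "cmod a < 1" and a0: "a \<noteq> 0"
  shows "(sc_primitive a has_vector_derivative
           (of_real (2 * cos \<theta>) + 2 * a
            + (a\<^sup>2 - 1) * (cis (-\<theta>) / (1 - a * cis (-\<theta>)) + cis \<theta> / (1 - a * cis \<theta>)))) (at \<theta>)"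
proof -
  note ln_minus = has_vector_derivative_Ln_one_minus_cis[OF a DERIV_minus[OF DERIV_ident]]
  note ln_plus = has_vector_derivative_Ln_one_minus_cis[OF a DERIV_ident]
  have "(sc_primitive a has_vector_derivative
           (of_real (2 * cos \<theta>) + 2 * a - \<i> * (a - 1/a) *
             (\<i> * a * cis (-\<theta>) / (1 - a * cis (-\<theta>)) - (- \<i> * a * cis \<theta> / (1 - a * cis \<theta>))))) (at \<theta>)"
    unfolding sc_primitive_def
    by (intro has_vector_derivative_diff has_vector_derivative_add has_vector_derivative_mult_right)
       (use ln_minus ln_plus in \<open>auto intro!: derivative_eq_intros\<close>)
  moreover have "x - \<i> * (a - 1/a) * (\<i> * a * d / P - (- \<i> * a * c / Q)) = x + (a\<^sup>2 - 1) * (d / P + c / Q)"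
    for x c d P Q :: complex
  proof -
    have "x - \<i> * (a - 1/a) * (\<i> * a * d / P - (- \<i> * a * c / Q)) = x + (a * (a - 1/a)) * (d / P + c / Q)"
      by (simp add: divide_inverse algebra_simps)
    also have "a * (a - 1/a) = a\<^sup>2 - 1"
      using a0 by (simp add: field_simps power2_eq_square)
    finally show ?thesis .
  qed
  ultimately show ?thesis by (elim has_vector_derivative_eq_rhs) blast
qed

lemma sc_primitive_derivative_identity:
  fixes a c d :: complex
  assumes cd: "c * d = 1" and a: "a \<noteq> 0" and P: "1 - a * c \<noteq> 0" "1 - a * d \<noteq> 0"
  shows "(c + d + 2 * a + (a\<^sup>2 - 1) * (d / (1 - a * d) + c / (1 - a * c))) * (c + d - (a + 1/a))
         = (c - d)\<^sup>2"
proof -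
  define D where "D = c + d - (a + 1/a)"
  define F where "F = d / (1 - a * d) + c / (1 - a * c)"
  have PP: "(1 - a * d) * (1 - a * c) = - a * D"
    unfolding D_def using cd a by (simp add: field_simps)
  then have D: "D \<noteq> 0" using P by auto
  have "F = (d * (1 - a * c) + c * (1 - a * d)) / ((1 - a * d) * (1 - a * c))"
    unfolding F_def by (rule add_frac_eq[OF P(2,1)])
  also have "\<dots> = (c + d - 2 * a) / (- a * D)"
    unfolding PP using cd by (simp add: algebra_simps)
  finally have FD: "a * (F * D) = 2 * a - (c + d)"
    using a D by (simp add: field_simps)
  have "(a\<^sup>2 - 1) * F * D = (a - 1/a) * (a * (F * D))"
    using a by (simp add: field_simps power2_eq_square)
  also have "\<dots> = - (a - 1/a) * (c + d - 2 * a)"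
    unfolding FD by (simp add: algebra_simps)
  finally have "(c + d + 2 * a + (a\<^sup>2 - 1) * F) * D
      = (c + d + 2 * a) * (c + d - (a + 1/a)) - (a - 1/a) * (c + d - 2 * a)"
    unfolding D_def by (simp add: algebra_simps)
  also have "\<dots> = (c - d)\<^sup>2"
    using cd a by (simp add: field_simps power2_eq_square)
  finally show ?thesis unfolding D_def F_def .
qed

lemma has_vector_derivative_sc_primitive_arccos:
  assumes a: "cmod a < 1" "a \<noteq> 0" and w: "Im (a + 1/a) \<noteq> 0" and x: "\<bar>x\<bar> < 2"
  shows "((\<lambda>x. sc_primitive a (arccos (x/2))) has_vector_derivative
           of_real (sqrt (4 - x\<^sup>2)) / (of_real x - (a + 1/a))) (at x)"
proof -
  define \<theta> where "\<theta> = arccos (x/2)"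
  define s where "s = sin \<theta>"
  define G' where "G' = of_real (2 * cos \<theta>) + 2 * a
            + (a\<^sup>2 - 1) * (cis (-\<theta>) / (1 - a * cis (-\<theta>)) + cis \<theta> / (1 - a * cis \<theta>))"
  have cos: "cos \<theta> = x/2" unfolding \<theta>_def using x by simp
  have s1: "sqrt (1 - (x/2)\<^sup>2) = s" unfolding s_def \<theta>_def using x by (simp add: sin_arccos)
  have s: "sqrt (4 - x\<^sup>2) = 2 * s"
    unfolding s1[symmetric] by (simp add: power_divide field_simps real_sqrt_divide)
  have "0 < sqrt (4 - x\<^sup>2)" using x by (simp add: power2_less_4_iff)
  then have s0: "s > 0" unfolding s by simp
  have "((\<lambda>x. arccos (x/2)) has_real_derivative inverse (- sqrt (1 - (x/2)\<^sup>2)) * (1/2)) (at x)"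
    by (rule DERIV_chain2[OF DERIV_arccos]) (use x in \<open>auto intro!: derivative_eq_intros\<close>)
  then have darccos: "((\<lambda>x. arccos (x/2)) has_real_derivative - 1 / (2 * s)) (at x)"
    unfolding s1 by (simp add: field_simps)
  have D: "((\<lambda>x. sc_primitive a (arccos (x/2))) has_vector_derivative (- 1 / (2 * s)) *\<^sub>R G') (at x)"
    using vector_diff_chain_at[OF has_vector_derivative_of_real[OF darccos]
        has_vector_derivative_sc_primitive[OF a]] unfolding \<theta>_def G'_def by (simp add: o_def)
  have cis_sum: "cis \<theta> + cis (-\<theta>) = of_real x" and cis_diff: "cis \<theta> - cis (-\<theta>) = 2 * \<i> * of_real s"
    and cis_prod: "cis \<theta> * cis (-\<theta>) = 1"
    by (simp_all add: complex_eq_iff cos s_def cis_mult)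
  have "1 - a * cis \<phi> \<noteq> 0" for \<phi>
    using one_minus_mult_notin_nonpos_Reals[OF a(1), of "cis \<phi>"] by auto
  from sc_primitive_derivative_identity[OF cis_prod a(2) this this]
  have "G' * (of_real x - (a + 1/a)) = - 4 * of_real (s\<^sup>2)"
    unfolding cis_sum cis_diff G'_def cos by (simp add: algebra_simps power2_eq_square)
  moreover have "of_real x - (a + 1/a) \<noteq> 0"
    using w by (metis Im_complex_of_real right_minus_eq)
  ultimately have "G' = - 4 * of_real (s\<^sup>2) / (of_real x - (a + 1/a))"
    by (simp add: field_simps)
  then have "(- 1 / (2 * s)) *\<^sub>R G' = of_real (sqrt (4 - x\<^sup>2)) / (of_real x - (a + 1/a))"
    unfolding s using s0 by (simp add: scaleR_conv_of_real field_simps power2_eq_square)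
  with D show ?thesis by simp
qed

lemma has_integral_semicircle_kernel:
  fixes a :: complex
  assumes a: "cmod a < 1" "a \<noteq> 0" and w: "Im (a + 1/a) \<noteq> 0"
  shows "((\<lambda>x. of_real (sqrt (4 - x\<^sup>2)) / (of_real x - (a + 1/a))) has_integral - 2 * of_real pi * a) {-2..2}"
proof -
  have "continuous_on {-2..2} (\<lambda>x. sc_primitive a (arccos (x/2)))"
    unfolding sc_primitive_def using one_minus_mult_notin_nonpos_Reals[OF a(1)]
    by (intro continuous_intros) auto
  then have "((\<lambda>x. of_real (sqrt (4 - x\<^sup>2)) / (of_real x - (a + 1/a))) has_integral
      sc_primitive a (arccos (2/2)) - sc_primitive a (arccos (-2/2))) {-2..2}"
    by (intro fundamental_theorem_of_calculus_interior has_vector_derivative_sc_primitive_arccos a w)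
       auto
  then show ?thesis by (simp add: sc_primitive_def mult_ac flip: cis_cnj)
qed

lemma inverse_eq_cnj_divide: "inverse (m::complex) = cnj m / of_real ((cmod m)\<^sup>2)"
  by (metis complex_div_cnj inverse_eq_divide mult_1)

lemma eq_neg_add_inverse_if_quadratic:
  fixes m z :: complex
  assumes "m\<^sup>2 + z * m + 1 = 0"
  shows "z = - (m + inverse m)"
proof -
  have "m \<noteq> 0" using assms by auto
  with assms show ?thesis by (simp add: field_simps power2_eq_square eq_neg_iff_add_eq_0 add.assoc)
qed

lemma Im_unit_circle_root:
  fixes m z :: complex
  assumes "cmod m = 1" "m\<^sup>2 + z * m + 1 = 0"
  shows "Im z = 0"
  using eq_neg_add_inverse_if_quadratic[OF assms(2)] assms(1) by (simp add: inverse_eq_cnj_divide)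

lemma quadratic_root_in_unit_disc:
  fixes z :: complex
  assumes z: "Im z \<noteq> 0"
  shows "\<exists>m. cmod m < 1 \<and> m\<^sup>2 + z * m + 1 = 0"
proof -
  define r where "r = csqrt (z\<^sup>2 - 4)"
  define m1 where "m1 = (- z + r) / 2"
  define m2 where "m2 = (- z - r) / 2"
  have r2: "r\<^sup>2 = z\<^sup>2 - 4" unfolding r_def by simp
  have "m1\<^sup>2 + z * m1 + 1 = (r\<^sup>2 - (z\<^sup>2 - 4)) / 4" "m2\<^sup>2 + z * m2 + 1 = (r\<^sup>2 - (z\<^sup>2 - 4)) / 4"
    unfolding m1_def m2_def by (simp_all add: field_simps power2_eq_square)
  then have roots: "m1\<^sup>2 + z * m1 + 1 = 0" "m2\<^sup>2 + z * m2 + 1 = 0"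
    unfolding r2 by simp_all
  have "m1 * m2 = (z\<^sup>2 - r\<^sup>2) / 4"
    unfolding m1_def m2_def by (simp add: field_simps power2_eq_square)
  then have "m1 * m2 = 1" unfolding r2 by simp
  then have prod: "cmod m1 * cmod m2 = 1" by (metis norm_mult norm_one)
  have "cmod m1 \<noteq> 1" using Im_unit_circle_root[OF _ roots(1)] z by blast
  then have "cmod m1 < 1 \<or> cmod m2 < 1"
    using prod by (smt (verit) mult_less_cancel_left2 norm_ge_zero)
  then show ?thesis using roots by blast
qed

lemma m_sc_eq_root:
  assumes z: "Im z > 0" and m: "cmod m < 1" "m\<^sup>2 + z * m + 1 = 0"
  shows "m_sc z = m"
proof -
  have m0: "m \<noteq> 0" using m(2) by auto
  have z_eq: "z = - m + 1 / - m"
    using eq_neg_add_inverse_if_quadratic[OF m(2)] by (simp add: inverse_eq_divide)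
  define g where "g = (\<lambda>x::real. of_real (sqrt (4 - x\<^sup>2)) / (of_real x - z) / of_real (2 * pi))"
  have "(g has_integral (- 2 * of_real pi * - m) / of_real (2 * pi)) {-2..2}"
    unfolding g_def z_eq
    by (intro has_integral_divide has_integral_semicircle_kernel) (use m m0 z z_eq in auto)
  then have g_int: "(g has_integral m) {-2..2}" by simp
  have "continuous_on {-2..2} g"
    unfolding g_def using z by (intro continuous_intros) (auto simp: complex_eq_iff)
  then have g_set_int: "set_integrable lborel {-2..2} g" by (rule borel_integrable_atLeastAtMost')
  have "(\<lambda>x. complex_of_real (sc_density x) / (complex_of_real x - z)) = (\<lambda>x. indicator {-2..2} x *\<^sub>R g x)"
    by (intro ext) (auto simp: sc_density_def g_def indicator_def power2_le_4_iff abs_le_iff max_def mult_ac)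
  then have "m_sc z = (LINT x:{-2..2}|lborel. g x)"
    unfolding m_sc_def set_lebesgue_integral_def by simp
  also have "\<dots> = integral {-2..2} g"
    by (rule set_borel_integral_eq_integral(2)[OF g_set_int])
  finally show ?thesis using g_int by (simp add: integral_unique)
qed

lemma m_sc_quadratic:
  assumes "Im z > 0"
  shows "cmod (m_sc z) < 1" "(m_sc z)\<^sup>2 + z * m_sc z + 1 = 0"
proof -
  from assms have "Im z \<noteq> 0" by simp
  then obtain m where "cmod m < 1" "m\<^sup>2 + z * m + 1 = 0"
    using quadratic_root_in_unit_disc by blast
  with m_sc_eq_root[OF assms this] show "cmod (m_sc z) < 1" "(m_sc z)\<^sup>2 + z * m_sc z + 1 = 0"
    by simp_all
qed

lemma Im_m_sc_pos:
  assumes z: "Im z > 0"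
  shows "Im (m_sc z) > 0"
proof -
  define m where "m = m_sc z"
  have m: "cmod m < 1" "m\<^sup>2 + z * m + 1 = 0" unfolding m_def using m_sc_quadratic[OF z] by auto
  then have m0: "m \<noteq> 0" by auto
  from eq_neg_add_inverse_if_quadratic[OF m(2)] have "Im z = Im (- (m + inverse m))" by simp
  also have "\<dots> = Im m * (1 / (cmod m)\<^sup>2 - 1)"
  proof -
    have "(Re m)\<^sup>2 + (Im m)\<^sup>2 \<noteq> 0"
      using m0 by (simp add: complex_eq_iff sum_power2_eq_zero_iff)
    then show ?thesis by (simp add: cmod_power2 Im_divide field_simps)
  qed
  finally have "Im z = Im m * (1 / (cmod m)\<^sup>2 - 1)" .
  moreover have "1 / (cmod m)\<^sup>2 - 1 > 0"
    using m m0 by (simp add: field_simps abs_square_less_1)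
  ultimately show ?thesis using z unfolding m_def by (simp add: zero_less_mult_iff)
qed

lemma cmod_m_sc_lower_bound:
  assumes z: "Im z > 0"
  shows "1 / (1 + cmod z) \<le> cmod (m_sc z)"
proof -
  define m where "m = m_sc z"
  note m = m_sc_quadratic[OF z, folded m_def]
  have "m * (m + z) = - 1" using m(2) by (simp add: algebra_simps power2_eq_square eq_neg_iff_add_eq_0)
  then have "cmod m * cmod (m + z) = 1" by (metis norm_minus_cancel norm_mult norm_one)
  moreover have "cmod (m + z) \<le> 1 + cmod z"
    using norm_triangle_ineq[of m z] m(1) by simp
  ultimately show ?thesis unfolding m_def[symmetric]
    by (smt (verit) divide_le_eq mult_left_mono norm_ge_zero)
qed

lemma m_bd_eq:
  assumes E: "\<bar>E\<bar> < 2"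
  shows "m_bd E = Complex (- E / 2) (sqrt (4 - E\<^sup>2) / 2)"
proof -
  define mE where "mE = Complex (- E / 2) (sqrt (4 - E\<^sup>2) / 2)"
  define q where "q = Im mE"
  have q_pos: "q > 0" unfolding q_def mE_def using E by (simp add: power2_less_4_iff)
  have sum: "mE + cnj mE = - of_real E" unfolding mE_def by (simp add: complex_eq_iff)
  have "(Re mE)\<^sup>2 + (Im mE)\<^sup>2 = 1"
    unfolding mE_def using E by (simp add: power_divide power2_less_4_iff less_imp_le field_simps)
  then have prod: "mE * cnj mE = 1" by (simp add: complex_mult_cnj)
  define f where "f = (\<lambda>\<epsilon>::real. m_sc (of_real E + \<i> * of_real \<epsilon>))"
  have bound: "cmod (f \<epsilon> - mE) \<le> \<epsilon> / q" if \<epsilon>: "\<epsilon> > 0" for \<epsilon>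
  proof -
    define m where "m = m_sc (of_real E + \<i> * of_real \<epsilon>)"
    have "Im (of_real E + \<i> * of_real \<epsilon>) > 0" using \<epsilon> by simp
    note m_props = m_sc_quadratic[OF this, folded m_def] Im_m_sc_pos[OF this, folded m_def]
    have "(m - mE) * (m - cnj mE) = m\<^sup>2 - (mE + cnj mE) * m + mE * cnj mE"
      by (simp add: algebra_simps power2_eq_square)
    also have "\<dots> = - (\<i> * of_real \<epsilon> * m)"
      unfolding sum prod using m_props(2) by (simp add: algebra_simps eq_neg_iff_add_eq_0)
    finally have "cmod (m - mE) * cmod (m - cnj mE) = cmod (\<i> * of_real \<epsilon> * m)"
      by (simp only: norm_mult[symmetric] norm_minus_cancel)
    also have "\<dots> = \<epsilon> * cmod m"
      using \<epsilon> by (simp add: norm_mult)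
    also have "\<dots> \<le> \<epsilon>" using m_props(1) \<epsilon> by (simp add: mult_left_le)
    finally have "cmod (m - mE) * cmod (m - cnj mE) \<le> \<epsilon>" .
    moreover have "q \<le> cmod (m - cnj mE)"
      using m_props(3) abs_Im_le_cmod[of "m - cnj mE"] unfolding q_def by simp
    ultimately have "cmod (m - mE) * q \<le> \<epsilon>"
      by (meson mult_left_mono norm_ge_zero order_trans)
    then show ?thesis unfolding m_def f_def using q_pos by (simp add: field_simps)
  qed
  have "((\<lambda>\<epsilon>. \<epsilon> / q) \<longlongrightarrow> 0) (at_right 0)"
    using q_pos by (intro tendsto_eq_intros) auto
  then have "((\<lambda>\<epsilon>. f \<epsilon> - mE) \<longlongrightarrow> 0) (at_right 0)"
    by (rule Lim_null_comparison[rotated])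
       (use eventually_at_right_less[of "0::real"] bound in \<open>auto elim: eventually_mono\<close>)
  then have "(f \<longlongrightarrow> mE) (at_right 0)" by (rule LIM_zero_cancel)
  then show ?thesis unfolding m_bd_def f_def[symmetric] mE_def[symmetric] by (intro tendsto_Lim) simp_all
qed

lemma m_sc_flow_reparametrization:
  assumes z: "Im z > 0"
  obtains r E where "1 / (1 + cmod z) \<le> r" "r < 1" "\<bar>E\<bar> \<le> \<bar>Re z\<bar>"
    "z_flow E (r\<^sup>2) = of_real r * z" "m_sc z = of_real r * m_bd E"
proof -
  define m where "m = m_sc z"
  define r where "r = cmod m"
  define E where "E = - 2 * Re m / r"
  have r: "0 < r" "r < 1" and m_root: "m\<^sup>2 + z * m + 1 = 0" and Im_m: "Im m > 0"
    using m_sc_quadratic[OF z] Im_m_sc_pos[OF z] unfolding r_def m_def by auto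
  have r2: "r\<^sup>2 = (Re m)\<^sup>2 + (Im m)\<^sup>2" unfolding r_def by (simp add: cmod_power2)
  have "\<bar>Re m\<bar>\<^sup>2 < r\<^sup>2" using Im_m r2 by simp
  then have "\<bar>Re m\<bar> < r" by (rule power_less_imp_less_base) (use r(1) in simp)
  then have E: "\<bar>E\<bar> < 2" unfolding E_def using r by (simp add: abs_mult divide_less_eq)
  have "sqrt (4 - E\<^sup>2) = 2 * Im m / r"
    unfolding E_def using r r2 Im_m by (intro real_sqrt_unique) (auto simp: field_simps power2_eq_square)
  then have m_bd: "m_bd E = m / of_real r"
    unfolding m_bd_eq[OF E] using r by (simp add: complex_eq_iff E_def)
  have z_eq: "z = - (m + cnj m / of_real (r\<^sup>2))"
    using eq_neg_add_inverse_if_quadratic[OF m_root] unfolding inverse_eq_cnj_divide r_def .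
  have E_eq: "of_real E = - (m + cnj m) / of_real r"
    unfolding E_def by (simp add: complex_eq_iff)
  have "z_flow E (r\<^sup>2) = of_real r * z"
    unfolding z_flow_def m_bd z_eq E_eq using r by (simp add: field_simps power2_eq_square)
  moreover have "m_sc z = of_real r * m_bd E"
    unfolding m_bd m_def using r by simp
  moreover have "\<bar>E\<bar> \<le> \<bar>Re z\<bar>"
  proof -
    have "0 \<le> (1 - 1 / r)\<^sup>2" by simp
    then have "2 / r \<le> 1 + 1 / r\<^sup>2" by (simp add: power2_diff power_divide)
    then have "\<bar>Re m\<bar> * (2 / r) \<le> \<bar>Re m\<bar> * (1 + 1 / r\<^sup>2)"
      by (rule mult_left_mono) simp
    then have "\<bar>E\<bar> \<le> \<bar>Re m\<bar> * (1 + 1 / r\<^sup>2)"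
      unfolding E_def using r by (simp add: abs_mult mult.commute)
    also have "\<dots> = \<bar>Re m * (1 + 1 / r\<^sup>2)\<bar>"
      by (simp add: abs_mult add_nonneg_nonneg)
    also have "\<dots> = \<bar>Re z\<bar>"
      unfolding z_eq by (simp add: algebra_simps)
    finally show ?thesis .
  qed
  ultimately show ?thesis
    using that cmod_m_sc_lower_bound[OF z] r(2) unfolding r_def m_def by blast
qed

section \<open>Inverses of square matrices\<close>

definition is_mat_inv :: "nat \<Rightarrow> (nat \<Rightarrow> nat \<Rightarrow> complex) \<Rightarrow> (nat \<Rightarrow> nat \<Rightarrow> complex) \<Rightarrow> bool" where
  "is_mat_inv N A B \<longleftrightarrow> (\<forall>i<N. \<forall>j<N. (\<Sum>k<N. A i k * B k j) = (if i = j then 1 else 0)) \<and>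
                         (\<forall>i j. \<not> (i < N \<and> j < N) \<longrightarrow> B i j = 0)"

definition mat_injective :: "nat \<Rightarrow> (nat \<Rightarrow> nat \<Rightarrow> complex) \<Rightarrow> bool" where
  "mat_injective N A \<longleftrightarrow> (\<forall>v. (\<forall>i<N. (\<Sum>k<N. A i k * v k) = 0) \<longrightarrow> (\<forall>k<N. v k = 0))"

lemma mat_injectiveD:
  "mat_injective N A \<Longrightarrow> (\<And>i. i < N \<Longrightarrow> (\<Sum>k<N. A i k * v k) = 0) \<Longrightarrow> k < N \<Longrightarrow> v k = 0"
  unfolding mat_injective_def by blast

lemma is_mat_inv_unique:
  assumes A: "mat_injective N A" and B: "is_mat_inv N A B" and C: "is_mat_inv N A C"
  shows "B = C"
proof (intro ext)
  fix i j
  show "B i j = C i j"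
  proof (cases "i < N \<and> j < N")
    case True
    have "(\<Sum>k<N. A l k * (B k j - C k j)) = 0" if "l < N" for l
    proof -
      have "(\<Sum>k<N. A l k * B k j) = (if l = j then 1 else 0)" "(\<Sum>k<N. A l k * C k j) = (if l = j then 1 else 0)"
        using B C that True unfolding is_mat_inv_def by blast+
      then show ?thesis by (simp add: right_diff_distrib sum_subtractf)
    qed
    then have "B i j - C i j = 0"
      using True by (intro mat_injectiveD[OF A, of "\<lambda>k. B k j - C k j"]) simp_all
    then show ?thesis by simp
  next
    case False
    then show ?thesis using B C unfolding is_mat_inv_def by simp
  qed
qed

lemma mat_inv_eqI:
  assumes "mat_injective N A" "is_mat_inv N A C"
  shows "mat_inv N A = C"
  unfolding mat_inv_def is_mat_inv_def[symmetric]
  using assms is_mat_inv_unique by blast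

lemma mat_inv_cong:
  assumes "\<And>i j. i < N \<Longrightarrow> j < N \<Longrightarrow> A i j = B i j"
  shows "mat_inv N A = mat_inv N B"
proof -
  have sums: "(\<Sum>k<N. A i k * C k j) = (\<Sum>k<N. B i k * C k j)" if "i < N" for i j C
    using that assms by (intro sum.cong) simp_all
  have "is_mat_inv N A = is_mat_inv N B"
    unfolding is_mat_inv_def by (intro ext) (simp add: sums)
  then show ?thesis unfolding mat_inv_def is_mat_inv_def[symmetric] by simp
qed

definition to_mat :: "nat \<Rightarrow> (nat \<Rightarrow> nat \<Rightarrow> complex) \<Rightarrow> complex Matrix.mat" where
  "to_mat N A = Matrix.mat N N (\<lambda>(i, j). A i j)"

definition cramer_inv :: "nat \<Rightarrow> (nat \<Rightarrow> nat \<Rightarrow> complex) \<Rightarrow> nat \<Rightarrow> nat \<Rightarrow> complex" where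
  "cramer_inv N A i j =
     (if i < N \<and> j < N then adj_mat (to_mat N A) $$ (i, j) / Determinant.det (to_mat N A) else 0)"

lemma to_mat_carrier: "to_mat N A \<in> carrier_mat N N"
  unfolding to_mat_def by simp

lemma det_to_mat_nonzero:
  assumes "mat_injective N A"
  shows "Determinant.det (to_mat N A) \<noteq> 0"
proof
  assume "Determinant.det (to_mat N A) = 0"
  then obtain v where v: "v \<in> carrier_vec N" "v \<noteq> 0\<^sub>v N" "to_mat N A *\<^sub>v v = 0\<^sub>v N"
    using det_0_iff_vec_prod_zero[OF to_mat_carrier] by blast
  have "(\<Sum>k<N. A i k * v $ k) = (to_mat N A *\<^sub>v v) $ i" if "i < N" for i
    using that v(1) unfolding to_mat_def by (simp add: scalar_prod_def atLeast0LessThan)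
  then have "v $ k = 0" if "k < N" for k
    using v(3) that by (intro mat_injectiveD[OF assms, of "\<lambda>k. v $ k"]) auto
  then have "v = 0\<^sub>v N" using v(1) by (intro eq_vecI) auto
  with v(2) show False ..
qed

lemma is_mat_inv_cramer_inv:
  assumes "mat_injective N A"
  shows "is_mat_inv N A (cramer_inv N A)"
proof -
  define M where "M = to_mat N A"
  have M: "M \<in> carrier_mat N N" and adj: "adj_mat M \<in> carrier_mat N N"
    unfolding M_def using to_mat_carrier adj_mat(1)[OF to_mat_carrier] by auto
  have det: "Determinant.det M \<noteq> 0" unfolding M_def by (rule det_to_mat_nonzero[OF assms])
  have "(\<Sum>k<N. A i k * cramer_inv N A k j) = (if i = j then 1 else 0)" if ij: "i < N" "j < N" for i j
  proof -
    have "(\<Sum>k<N. A i k * adj_mat M $$ (k, j)) = (M * adj_mat M) $$ (i, j)"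
      using ij M adj unfolding M_def to_mat_def by (simp add: scalar_prod_def atLeast0LessThan)
    also have "\<dots> = Determinant.det M * (if i = j then 1 else 0)"
      unfolding adj_mat(2)[OF M] using ij by simp
    finally have "(\<Sum>k<N. A i k * adj_mat M $$ (k, j)) = Determinant.det M * (if i = j then 1 else 0)" .
    moreover have "(\<Sum>k<N. A i k * cramer_inv N A k j) = (\<Sum>k<N. A i k * adj_mat M $$ (k, j)) / Determinant.det M"
      unfolding cramer_inv_def M_def[symmetric] using ij by (simp add: sum_divide_distrib)
    ultimately show ?thesis using det by simp
  qed
  then show ?thesis unfolding is_mat_inv_def cramer_inv_def by auto
qed

lemma mat_inv_eq_cramer_inv: "mat_injective N A \<Longrightarrow> mat_inv N A = cramer_inv N A"
  by (rule mat_inv_eqI[OF _ is_mat_inv_cramer_inv])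

lemma is_mat_inv_mat_inv: "mat_injective N A \<Longrightarrow> is_mat_inv N A (mat_inv N A)"
  by (simp add: is_mat_inv_cramer_inv mat_inv_eq_cramer_inv)

lemma mat_inv_scale:
  assumes A: "mat_injective N A" and c: "c \<noteq> 0"
  shows "mat_inv N (\<lambda>i j. c * A i j) = (\<lambda>i j. mat_inv N A i j / c)"
proof (rule mat_inv_eqI)
  show "mat_injective N (\<lambda>i j. c * A i j)"
    using A c unfolding mat_injective_def by (simp add: mult.assoc flip: sum_distrib_left)
  show "is_mat_inv N (\<lambda>i j. c * A i j) (\<lambda>i j. mat_inv N A i j / c)"
    using is_mat_inv_mat_inv[OF A] c unfolding is_mat_inv_def by simp
qed

lemma mat_injective_hermitian_shift:
  assumes herm: "\<And>i j. i < N \<Longrightarrow> j < N \<Longrightarrow> A j i = cnj (A i j)" and z: "Im z \<noteq> 0"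
  shows "mat_injective N (\<lambda>i j. A i j - (if i = j then z else 0))"
  unfolding mat_injective_def
proof (rule allI, rule impI)
  fix v assume kv: "\<forall>i<N. (\<Sum>k<N. (A i k - (if i = k then z else 0)) * v k) = 0"
  have Av: "(\<Sum>k<N. A i k * v k) = z * v i" if "i < N" for i
  proof -
    have "(\<Sum>k<N. (A i k - (if i = k then z else 0)) * v k)
        = (\<Sum>k<N. A i k * v k) - (\<Sum>k<N. (if i = k then z else 0) * v k)"
      by (simp add: left_diff_distrib sum_subtractf)
    also have "(\<Sum>k<N. (if i = k then z else 0) * v k) = (\<Sum>k<N. if i = k then z * v k else 0)"
      by (intro sum.cong) auto
    also have "\<dots> = z * v i"
      using that by (simp add: sum.delta')
    finally show ?thesis using kv that by simp
  qed
  \<comment> \<open>Q = v* A v is real because A is Hermitian, but A v = z v makes it z |v|^2.\<close>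
  define Q where "Q = (\<Sum>i<N. cnj (v i) * (\<Sum>k<N. A i k * v k))"
  have "Q = (\<Sum>i<N. z * of_real ((cmod (v i))\<^sup>2))"
    unfolding Q_def complex_norm_square
  proof (intro sum.cong refl)
    fix i assume "i \<in> {..<N}"
    then have "cnj (v i) * (\<Sum>k<N. A i k * v k) = cnj (v i) * (z * v i)" by (simp add: Av)
    then show "cnj (v i) * (\<Sum>k<N. A i k * v k) = z * (v i * cnj (v i))" by (simp add: mult_ac)
  qed
  then have Q_eq: "Q = z * of_real (\<Sum>i<N. (cmod (v i))\<^sup>2)"
    by (simp add: sum_distrib_left)
  have herm': "cnj (A i k) = A k i" if "i < N" "k < N" for i k
    using herm[OF that] by simp
  have "cnj Q = (\<Sum>i<N. \<Sum>k<N. v i * (A k i * cnj (v k)))"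
    unfolding Q_def by (simp add: herm' sum_distrib_left)
  also have "\<dots> = (\<Sum>k<N. \<Sum>i<N. v i * (A k i * cnj (v k)))"
    by (rule sum.swap)
  also have "\<dots> = Q"
    unfolding Q_def sum_distrib_left by (simp only: mult.commute mult.left_commute)
  finally have "Im (cnj Q) = Im Q" by simp
  then have "Im Q = 0" by simp
  then have "(\<Sum>i<N. (cmod (v i))\<^sup>2) = 0" using z unfolding Q_eq by simp
  then show "\<forall>k<N. v k = 0" by (simp add: sum_nonneg_eq_0_iff)
qed

lemma borel_measurable_det:
  fixes F :: "'x \<Rightarrow> complex Matrix.mat"
  assumes F: "\<And>x. F x \<in> carrier_mat n n"
    and entries: "\<And>i j. i < n \<Longrightarrow> j < n \<Longrightarrow> (\<lambda>x. F x $$ (i, j)) \<in> borel_measurable \<Omega>"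
  shows "(\<lambda>x. Determinant.det (F x)) \<in> borel_measurable \<Omega>"
proof -
  have "(\<lambda>x. Determinant.det (F x)) =
      (\<lambda>x. \<Sum>p \<in> {p. p permutes {0..<n}}. signof p * (\<Prod>i = 0..<n. F x $$ (i, p i)))"
    using det_def'[OF F] by (intro ext) auto
  moreover have "(\<lambda>x. \<Prod>i = 0..<n. F x $$ (i, p i)) \<in> borel_measurable \<Omega>" if "p permutes {0..<n}" for p
    using that by (intro borel_measurable_prod entries) (auto dest: permutes_in_image)
  ultimately show ?thesis by simp
qed

lemma borel_measurable_adj_mat:
  fixes F :: "'x \<Rightarrow> complex Matrix.mat"
  assumes F: "\<And>x. F x \<in> carrier_mat n n"
    and entries: "\<And>i j. i < n \<Longrightarrow> j < n \<Longrightarrow> (\<lambda>x. F x $$ (i, j)) \<in> borel_measurable \<Omega>"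
    and ij: "i < n" "j < n"
  shows "(\<lambda>x. adj_mat (F x) $$ (i, j)) \<in> borel_measurable \<Omega>"
proof -
  have "adj_mat (F x) $$ (i, j) = (- 1) ^ (j + i) * Determinant.det (mat_delete (F x) j i)" for x
    using F[of x] ij unfolding adj_mat_def cofactor_def by auto
  moreover have "(\<lambda>x. Determinant.det (mat_delete (F x) j i)) \<in> borel_measurable \<Omega>"
  proof (rule borel_measurable_det)
    show "mat_delete (F x) j i \<in> carrier_mat (n - 1) (n - 1)" for x
      by (rule mat_delete_carrier[OF F])
    fix a b assume ab: "a < n - 1" "b < n - 1"
    then have "(\<lambda>x. F x $$ (if a < j then a else Suc a, if b < i then b else Suc b)) \<in> borel_measurable \<Omega>"
      by (intro entries) auto
    moreover have "mat_delete (F x) j i $$ (a, b) = F x $$ (if a < j then a else Suc a, if b < i then b else Suc b)" for x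
      using F[of x] ab unfolding mat_delete_def by auto
    ultimately show "(\<lambda>x. mat_delete (F x) j i $$ (a, b)) \<in> borel_measurable \<Omega>" by simp
  qed
  ultimately show ?thesis by simp
qed

lemma borel_measurable_mat_inv:
  assumes inj: "\<And>x. mat_injective N (A x)"
    and entries: "\<And>i j. i < N \<Longrightarrow> j < N \<Longrightarrow> (\<lambda>x. A x i j) \<in> borel_measurable \<Omega>"
  shows "(\<lambda>x. mat_inv N (A x) i j) \<in> borel_measurable \<Omega>"
proof (cases "i < N \<and> j < N")
  case True
  have to_mat: "(\<lambda>x. to_mat N (A x) $$ (a, b)) \<in> borel_measurable \<Omega>" if "a < N" "b < N" for a b
    using entries[OF that] that unfolding to_mat_def by simp
  have "(\<lambda>x. adj_mat (to_mat N (A x)) $$ (i, j) / Determinant.det (to_mat N (A x))) \<in> borel_measurable \<Omega>"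
    using True by (intro borel_measurable_divide borel_measurable_adj_mat borel_measurable_det
        to_mat) (auto simp: to_mat_carrier)
  then show ?thesis
    unfolding mat_inv_eq_cramer_inv[OF inj] cramer_inv_def using True by simp
next
  case False
  then have "(\<lambda>x. mat_inv N (A x) i j) = (\<lambda>x. 0)"
    unfolding mat_inv_eq_cramer_inv[OF inj] cramer_inv_def by auto
  then show ?thesis by simp
qed

section \<open>Resolvents of Gaussian band matrices\<close>

lemma gauss_mat_hermitian: "gauss_mat W L s X Y j i = cnj (gauss_mat W L s X Y i j)"
  unfolding gauss_mat_def by (cases i j rule: linorder_cases) auto

lemma gauss_mat_scale:
  assumes "0 \<le> t"
  shows "gauss_mat W L t X Y i j = of_real (sqrt t) * gauss_mat W L 1 X Y i j"
  unfolding gauss_mat_def using assms by (auto simp: real_sqrt_mult)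

lemma gauss_mat_cong:
  assumes "\<And>a b. a \<le> b \<Longrightarrow> b < N \<Longrightarrow> X a b = X' a b \<and> Y a b = Y' a b" and "i < N" "j < N"
  shows "gauss_mat W L s X Y i j = gauss_mat W L s X' Y' i j"
  unfolding gauss_mat_def using assms by (cases i j rule: linorder_cases) auto

lemma mat_injective_gauss_mat_shift:
  assumes "Im z \<noteq> 0"
  shows "mat_injective N (\<lambda>i j. gauss_mat W L s X Y i j - (if i = j then z else 0))"
  using assms by (intro mat_injective_hermitian_shift gauss_mat_hermitian)

lemma resolvent_gauss_mat_rescale:
  assumes z: "Im z \<noteq> 0" and r: "r > 0"
  shows "(\<lambda>i j. of_real r * resolvent N (gauss_mat W L (r\<^sup>2) X Y) (of_real r * z) i j)
       = resolvent N (gauss_mat W L 1 X Y) z"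
proof -
  define G where "G = (\<lambda>i j. gauss_mat W L 1 X Y i j - (if i = j then z else 0))"
  have "resolvent N (gauss_mat W L (r\<^sup>2) X Y) (of_real r * z) = mat_inv N (\<lambda>i j. of_real r * G i j)"
    unfolding resolvent_def G_def using r
    by (intro arg_cong[where f = "mat_inv N"] ext) (simp add: gauss_mat_scale[of "r\<^sup>2"] right_diff_distrib)
  also have "\<dots> = (\<lambda>i j. mat_inv N G i j / of_real r)"
    using r unfolding G_def by (intro mat_inv_scale mat_injective_gauss_mat_shift z) simp
  finally show ?thesis using r unfolding resolvent_def G_def by simp
qed

definition gauss_idx :: "nat \<Rightarrow> (nat \<times> nat + nat \<times> nat) set" where
  "gauss_idx N = Inl ` upper_idx N \<union> Inr ` upper_idx N"

definition gauss_entry ::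
  "('w \<Rightarrow> nat \<Rightarrow> nat \<Rightarrow> real) \<Rightarrow> ('w \<Rightarrow> nat \<Rightarrow> nat \<Rightarrow> real) \<Rightarrow> nat \<times> nat + nat \<times> nat \<Rightarrow> 'w \<Rightarrow> real" where
  "gauss_entry xi eta k = (case k of Inl (i, j) \<Rightarrow> (\<lambda>\<omega>. xi \<omega> i j) | Inr (i, j) \<Rightarrow> (\<lambda>\<omega>. eta \<omega> i j))"

definition sample_xi :: "(nat \<times> nat + nat \<times> nat \<Rightarrow> real) \<Rightarrow> nat \<Rightarrow> nat \<Rightarrow> real" where
  "sample_xi f i j = f (Inl (i, j))"

definition sample_eta :: "(nat \<times> nat + nat \<times> nat \<Rightarrow> real) \<Rightarrow> nat \<Rightarrow> nat \<Rightarrow> real" where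
  "sample_eta f i j = f (Inr (i, j))"

lemma std_gauss_family_distributed:
  assumes "std_gauss_family M N xi eta" "k \<in> gauss_idx N"
  shows "distributed M lborel (gauss_entry xi eta k) std_normal_density"
  using assms unfolding std_gauss_family_def gauss_idx_def gauss_entry_def by auto

lemma std_gauss_family_measurable:
  assumes "std_gauss_family M N xi eta" "k \<in> gauss_idx N"
  shows "gauss_entry xi eta k \<in> borel_measurable M"
  using distributed_measurable[OF std_gauss_family_distributed[OF assms]] by simp

lemma distr_std_gauss_family:
  assumes G: "std_gauss_family M N xi eta" and N: "0 < N"
  shows "distr M (PiM (gauss_idx N) (\<lambda>_. borel)) (\<lambda>\<omega>. \<lambda>k\<in>gauss_idx N. gauss_entry xi eta k \<omega>)
       = PiM (gauss_idx N) (\<lambda>_. density lborel std_normal_density)"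
proof -
  have M: "prob_space M" and indep: "prob_space.indep_vars M (\<lambda>_. borel) (gauss_entry xi eta) (gauss_idx N)"
    using G unfolding std_gauss_family_def gauss_entry_def gauss_idx_def by simp_all
  have law: "distr M borel (gauss_entry xi eta k) = density lborel std_normal_density" if "k \<in> gauss_idx N" for k
    using distributed_distr_eq_density[OF std_gauss_family_distributed[OF G that]] by (simp cong: distr_cong)
  have "gauss_idx N \<noteq> {}" using N unfolding gauss_idx_def upper_idx_def by auto
  from prob_space.indep_vars_iff_distr_eq_PiM'[OF M this std_gauss_family_measurable[OF G]] indep
  have "distr M (PiM (gauss_idx N) (\<lambda>_. borel)) (\<lambda>\<omega>. \<lambda>k\<in>gauss_idx N. gauss_entry xi eta k \<omega>)
      = PiM (gauss_idx N) (\<lambda>k. distr M borel (gauss_entry xi eta k))"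
    by simp
  also have "\<dots> = PiM (gauss_idx N) (\<lambda>_. density lborel std_normal_density)"
    by (rule PiM_cong) (simp_all add: law)
  finally show ?thesis .
qed

lemma borel_measurable_gauss_mat_sample:
  assumes "i < N" "j < N"
  shows "(\<lambda>f. gauss_mat W L s (sample_xi f) (sample_eta f) i j) \<in> borel_measurable (PiM (gauss_idx N) (\<lambda>_. borel))"
  using assms unfolding gauss_mat_def sample_xi_def sample_eta_def
  by (cases i j rule: linorder_cases)
     (auto intro!: borel_measurable_times borel_measurable_add borel_measurable_diff borel_measurable_divide
        measurable_compose[OF _ borel_measurable_of_real] measurable_component_singleton
        simp: gauss_idx_def upper_idx_def)

lemma mat_law_resolvent_gauss:
  assumes G: "std_gauss_family M N xi eta" and N: "0 < N" and z: "Im z \<noteq> 0"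
  shows "mat_law M N (\<lambda>\<omega>. resolvent N (gauss_mat W L 1 (xi \<omega>) (eta \<omega>)) z) =
    distr (PiM (gauss_idx N) (\<lambda>_. density lborel std_normal_density)) (PiM ({..<N} \<times> {..<N}) (\<lambda>_. borel))
      (\<lambda>f. \<lambda>(i, j)\<in>{..<N} \<times> {..<N}. resolvent N (gauss_mat W L 1 (sample_xi f) (sample_eta f)) z i j)"
  (is "_ = distr _ _ ?R")
proof -
  define sample where "sample = (\<lambda>\<omega>. \<lambda>k\<in>gauss_idx N. gauss_entry xi eta k \<omega>)"
  have sample_meas: "sample \<in> measurable M (PiM (gauss_idx N) (\<lambda>_. borel))"
    unfolding sample_def by (intro measurable_restrict std_gauss_family_measurable[OF G])
  have R_meas: "?R \<in> measurable (PiM (gauss_idx N) (\<lambda>_. borel)) (PiM ({..<N} \<times> {..<N}) (\<lambda>_. borel))"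
    unfolding resolvent_def using z
    by (intro measurable_restrict)
       (auto intro!: borel_measurable_mat_inv mat_injective_gauss_mat_shift borel_measurable_diff
          borel_measurable_gauss_mat_sample)
  have "resolvent N (gauss_mat W L 1 (xi \<omega>) (eta \<omega>)) z
      = resolvent N (gauss_mat W L 1 (sample_xi (sample \<omega>)) (sample_eta (sample \<omega>))) z" for \<omega>
    unfolding resolvent_def
    by (intro mat_inv_cong arg_cong2[where f = "(-)"] gauss_mat_cong refl)
       (auto simp: sample_xi_def sample_eta_def sample_def gauss_idx_def upper_idx_def gauss_entry_def)
  then have "mat_law M N (\<lambda>\<omega>. resolvent N (gauss_mat W L 1 (xi \<omega>) (eta \<omega>)) z)
      = distr M (PiM ({..<N} \<times> {..<N}) (\<lambda>_. borel)) (?R \<circ> sample)"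
    unfolding mat_law_def by (intro distr_cong) simp_all
  also have "\<dots> = distr (distr M (PiM (gauss_idx N) (\<lambda>_. borel)) sample) (PiM ({..<N} \<times> {..<N}) (\<lambda>_. borel)) ?R"
    by (rule distr_distr[symmetric, OF R_meas sample_meas])
  finally show ?thesis unfolding sample_def distr_std_gauss_family[OF G N] .
qed

lemma mat_law_resolvent_gauss_rescale:
  assumes z: "Im z \<noteq> 0" and r: "r > 0" and N: "0 < N"
    and G: "std_gauss_family M N xi eta" and G': "std_gauss_family M' N xi' eta'"
  shows "mat_law M N (\<lambda>\<omega>. resolvent N (gauss_mat W L 1 (xi \<omega>) (eta \<omega>)) z) =
    mat_law M' N (\<lambda>\<omega> i j. of_real r * resolvent N (gauss_mat W L (r\<^sup>2) (xi' \<omega>) (eta' \<omega>)) (of_real r * z) i j)"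
  unfolding resolvent_gauss_mat_rescale[OF z r] mat_law_resolvent_gauss[OF G N z] mat_law_resolvent_gauss[OF G' N z] ..

theorem lemma2p1:
  fixes \<kappa> :: real
  assumes "\<kappa> > 0"
  shows "\<exists>c>0. \<forall>z::complex. 0 < Im z \<and> Im z \<le> 1 \<and> \<bar>Re z\<bar> \<le> 2 - \<kappa> \<longrightarrow>
     (\<exists>E t. \<bar>E\<bar> \<le> 2 - \<kappa> \<and> 0 \<le> t \<and> t < 1 \<and>
        z = complex_of_real (1 / sqrt t) * z_flow E t \<and>
        c \<le> t \<and> c * Im z \<le> Im (z_flow E t) \<and> Im (z_flow E t) \<le> Im z / c \<and>
        m_sc z = complex_of_real (sqrt t) * m_bd E \<and>
        (\<forall>(W::nat) (L::nat) (M::'a measure) xi eta (M'::'b measure) xi' eta'.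
           0 < W \<longrightarrow> 0 < L \<longrightarrow>
           std_gauss_family M (W * L) xi eta \<longrightarrow> std_gauss_family M' (W * L) xi' eta' \<longrightarrow>
           mat_law M (W * L) (\<lambda>\<omega>. resolvent (W * L) (gauss_mat W L 1 (xi \<omega>) (eta \<omega>)) z) =
           mat_law M' (W * L) (\<lambda>\<omega>. \<lambda>i j. complex_of_real (sqrt t) *
              resolvent (W * L) (gauss_mat W L t (xi' \<omega>) (eta' \<omega>)) (z_flow E t) i j)))"
  apply (rule exI[of _ "1/16"], intro conjI allI impI, simp)
  subgoal premises z for z
  proof -
    have Im_z: "Im z > 0" using z by simp
    obtain r E where r: "1 / (1 + cmod z) \<le> r" "r < 1" and E: "\<bar>E\<bar> \<le> \<bar>Re z\<bar>"
      and flow: "z_flow E (r\<^sup>2) = of_real r * z" and m: "m_sc z = of_real r * m_bd E"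
      using m_sc_flow_reparametrization[OF Im_z] by blast
    have "1 / 4 \<le> 1 / (1 + cmod z)"
      using z assms cmod_le[of z] by (simp add: divide_simps add_pos_nonneg)
    with r have r4: "1 / 4 \<le> r" by linarith
    then have "0 < r" "1 / 16 \<le> r\<^sup>2" using power_mono[of "1/4" r 2] by (simp_all add: power_divide)
    have E_bound: "\<bar>E\<bar> \<le> 2 - \<kappa>" using E z by linarith
    have r_facts: "r\<^sup>2 < 1" "\<bar>r\<bar> = r" "r \<noteq> 0" using r \<open>0 < r\<close> by (simp_all add: power_less_one_iff)
    have Im_bounds: "1/16 * Im z \<le> r * Im z" "r * Im z \<le> 16 * Im z"
      using r r4 Im_z by (simp_all add: mult_right_mono)
    show ?thesis
      apply (rule exI[of _ E], rule exI[of _ "r\<^sup>2"])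
      using E_bound r_facts Im_bounds \<open>1 / 16 \<le> r\<^sup>2\<close> Im_z
      by (simp add: flow m mat_law_resolvent_gauss_rescale[OF _ \<open>0 < r\<close>])
  qed
  done

end
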